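(* If the alphabet $\mathcal{A}\subset\mathbb{N}$ contains two consecutive positive integers $m$ and $m+1$, then the semigroup $\Gamma_{\mathcal{A}}$ has everywhere strong approximation.
   Context: For $a\in\mathbb{N}$ let $\gamma_a=\begin{pmatrix}0&1\\1&a\end{pmatrix}$. $\Gamma_{\mathcal{A}}\subset\mathrm{SL}_2(\mathbb{Z})$ is the semigroup generated by the products $\gamma_a\gamma_{a'}$, $a,a'\in\mathcal{A}$. $\Gamma_{\mathcal{A}}$ has everywhere strong approximation if for every $q\in\mathbb{N}$ the reduction of $\Gamma_{\mathcal{A}}$ modulo $q$ equals $\mathrm{SL}_2(\mathbb{Z}/q\mathbb{Z})$. *)

theory Defs
  imports "HOL-Analysis.Analysis" "HOL-Number_Theory.Cong"
begin

text \<open>2x2 integer matrices are rendered as int^2^2 (row i, column j is M $ i $ j).\<close>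

definition gamma_mat :: "nat \<Rightarrow> int^2^2" where
  "gamma_mat a = (\<chi> i j. if i = 1 then (if j = 1 then 0 else 1)
                          else (if j = 1 then 1 else int a))"

inductive_set Gamma_A :: "nat set \<Rightarrow> (int^2^2) set" for A :: "nat set" where
  gen: "a \<in> A \<Longrightarrow> a' \<in> A \<Longrightarrow> gamma_mat a ** gamma_mat a' \<in> Gamma_A A"
| mult: "g \<in> Gamma_A A \<Longrightarrow> h \<in> Gamma_A A \<Longrightarrow> g ** h \<in> Gamma_A A"

definition reduce_mod :: "int \<Rightarrow> int^2^2 \<Rightarrow> int^2^2" where
  "reduce_mod q M = (\<chi> i j. (M $ i $ j) mod q)"

text \<open>SL_2(Z/qZ), elements represented by matrices with entries in {0..q-1}.\<close>
definition SL2_mod :: "int \<Rightarrow> (int^2^2) set" where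
  "SL2_mod q = {M. (\<forall>i j. 0 \<le> M $ i $ j \<and> M $ i $ j < q) \<and> [det M = 1] (mod q)}"

definition everywhere_strong_approx :: "(int^2^2) set \<Rightarrow> bool" where
  "everywhere_strong_approx G \<longleftrightarrow> (\<forall>q::int. q \<ge> 1 \<longrightarrow> reduce_mod q ` G = SL2_mod q)"

end

theory Submission
  imports Defs
begin

text \<open>
  Reduced modulo q, the semigroup lands in the finite group SL_2(Z/qZ), where every element has
  finite order; so the reduction is a group and contains the inverse of (gamma_m gamma_m).
  Multiplying it with gamma_m gamma_(m+1) and gamma_(m+1) gamma_m gives the elementary matrices
  T = [[1,1],[0,1]] and L = [[1,0],[1,1]] modulo q. A Euclidean algorithm on the first column,
  run with powers of T and L, writes every matrix of determinant 1 modulo q as a product of them.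
\<close>

definition mat2 :: "int \<Rightarrow> int \<Rightarrow> int \<Rightarrow> int \<Rightarrow> int^2^2" where
  "mat2 a b c d = (\<chi> i j. if i = 1 then (if j = 1 then a else b) else (if j = 1 then c else d))"

lemma mat2_nth [simp]:
  "mat2 a b c d $ 1 $ 1 = a" "mat2 a b c d $ 1 $ 2 = b"
  "mat2 a b c d $ 2 $ 1 = c" "mat2 a b c d $ 2 $ 2 = d"
  by (simp_all add: mat2_def)

lemma mat2_eta: "mat2 (X$1$1) (X$1$2) (X$2$1) (X$2$2) = X"
  unfolding vec_eq_iff forall_2 by simp

lemma matrix_mul_nth_2:
  fixes X Y :: "int^2^2"
  shows "(X ** Y) $ i $ j = X$i$1 * Y$1$j + X$i$2 * Y$2$j"
  by (simp add: matrix_matrix_mult_def sum_2)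

lemma matrix_mul_mat2:
  "mat2 a b c d ** mat2 e f g h = mat2 (a*e + b*g) (a*f + b*h) (c*e + d*g) (c*f + d*h)"
  unfolding vec_eq_iff forall_2 by (simp add: matrix_mul_nth_2)

lemma mat_one_mat2: "(mat 1 :: int^2^2) = mat2 1 0 0 1"
  unfolding vec_eq_iff forall_2 by (simp add: mat_def)

lemma gamma_mat_mat2: "gamma_mat a = mat2 0 1 1 (int a)"
  unfolding vec_eq_iff forall_2 by (simp add: gamma_mat_def)

lemma det_mat2: "det (mat2 a b c d) = a*d - b*c"
  by (simp add: det_2)

definition mat_cong :: "int \<Rightarrow> int^2^2 \<Rightarrow> int^2^2 \<Rightarrow> bool" where
  "mat_cong q X Y \<longleftrightarrow> (\<forall>i j. [X$i$j = Y$i$j] (mod q))"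

lemma mat_cong_refl [simp]: "mat_cong q X X"
  by (simp add: mat_cong_def)

lemma mat_cong_sym: "mat_cong q X Y \<Longrightarrow> mat_cong q Y X"
  by (auto simp: mat_cong_def cong_sym)

lemma mat_cong_trans: "mat_cong q X Y \<Longrightarrow> mat_cong q Y Z \<Longrightarrow> mat_cong q X Z"
  unfolding mat_cong_def by (metis cong_trans)

lemma mat_cong_mult: "mat_cong q X Y \<Longrightarrow> mat_cong q X' Y' \<Longrightarrow> mat_cong q (X ** X') (Y ** Y')"
  unfolding mat_cong_def matrix_mul_nth_2 by (intro allI cong_add cong_mult) auto

lemma mat_cong_mat2_iff:
  "mat_cong q (mat2 a b c d) (mat2 e f g h) \<longleftrightarrow>
     [a = e] (mod q) \<and> [b = f] (mod q) \<and> [c = g] (mod q) \<and> [d = h] (mod q)"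
  unfolding mat_cong_def forall_2 by simp

lemma mat_cong_iff_reduce_mod: "mat_cong q X Y \<longleftrightarrow> reduce_mod q X = reduce_mod q Y"
  by (auto simp: reduce_mod_def vec_eq_iff mat_cong_def cong_def)

lemma finite_range_reduce_mod:
  assumes "q \<ge> 1"
  shows "finite (range (reduce_mod q))"
proof (rule finite_subset)
  let ?R = "{0..<q}"
  show "range (reduce_mod q) \<subseteq> (\<lambda>(a, b, c, d). mat2 a b c d) ` (?R \<times> ?R \<times> ?R \<times> ?R)"
  proof clarify
    fix X
    have "reduce_mod q X = (\<lambda>(a, b, c, d). mat2 a b c d) (X$1$1 mod q, X$1$2 mod q, X$2$1 mod q, X$2$2 mod q)"
      using mat2_eta[of "reduce_mod q X"] by (simp add: reduce_mod_def)
    then show "reduce_mod q X \<in> (\<lambda>(a, b, c, d). mat2 a b c d) ` (?R \<times> ?R \<times> ?R \<times> ?R)"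
      by (rule image_eqI) (use assms in simp)
  qed
qed simp

subsection \<open>Inverses modulo q\<close>

definition adj2 :: "int^2^2 \<Rightarrow> int^2^2" where
  "adj2 X = mat2 (X$2$2) (- X$1$2) (- X$2$1) (X$1$1)"

lemma adj2_mult_self: "det X = 1 \<Longrightarrow> adj2 X ** X = mat 1"
  by (subst (2) mat2_eta[symmetric])
     (simp add: adj2_def matrix_mul_mat2 mat_one_mat2 det_2 algebra_simps)

lemma mat_cong_adj2: "mat_cong q X Y \<Longrightarrow> mat_cong q (adj2 X) (adj2 Y)"
  by (simp add: mat_cong_def adj2_def forall_2 cong_minus_minus_iff)

fun mat_pow :: "int^2^2 \<Rightarrow> nat \<Rightarrow> int^2^2" where
  "mat_pow g 0 = mat 1"
| "mat_pow g (Suc n) = g ** mat_pow g n"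

lemma mat_pow_add: "mat_pow g (m + n) = mat_pow g m ** mat_pow g n"
  by (induction m) (simp_all add: matrix_mul_assoc)

lemma adj2_pow_mult_pow: "det g = 1 \<Longrightarrow> mat_pow (adj2 g) n ** mat_pow g n = mat 1"
proof (induction n)
  case (Suc n)
  have "mat_pow (adj2 g) (Suc n) ** mat_pow g (Suc n) =
        adj2 g ** (mat_pow (adj2 g) n ** mat_pow g n) ** g"
    using mat_pow_add[of g n 1] by (simp add: matrix_mul_assoc)
  with Suc adj2_mult_self show ?case by simp
qed simp

lemma mat_pow_cong_one:
  assumes "q \<ge> 1" and "det g = 1"
  obtains n where "n \<ge> 1" and "mat_cong q (mat_pow g n) (mat 1)"
proof -
  let ?f = "\<lambda>k. reduce_mod q (mat_pow g k)"
  have "finite (range ?f)"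
    using finite_range_reduce_mod[OF assms(1)] by (rule finite_subset[rotated]) auto
  then obtain i j where "i \<noteq> j" "?f i = ?f j"
    using finite_imageD[of ?f UNIV] unfolding inj_on_def by auto
  then obtain i j where ij: "i < j" "?f i = ?f j"
    by (metis linorder_neqE_nat)
  then have "mat_cong q (mat_pow (adj2 g) i ** mat_pow g i) (mat_pow (adj2 g) i ** mat_pow g j)"
    by (intro mat_cong_mult) (simp_all add: mat_cong_iff_reduce_mod)
  moreover have "mat_pow g j = mat_pow g i ** mat_pow g (j - i)"
    using mat_pow_add[of g i "j - i"] ij(1) by simp
  ultimately have "mat_cong q (mat 1) (mat_pow g (j - i))"
    using adj2_pow_mult_pow[OF assms(2), of i] by (simp add: matrix_mul_assoc)
  then show thesis
    using that[of "j - i"] ij(1) mat_cong_sym by simp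
qed

definition cong_hull :: "int \<Rightarrow> (int^2^2) set \<Rightarrow> (int^2^2) set" where
  "cong_hull q G = {X. \<exists>g\<in>G. mat_cong q g X}"

lemma mem_cong_hull: "g \<in> G \<Longrightarrow> g \<in> cong_hull q G"
  unfolding cong_hull_def using mat_cong_refl by blast

lemma cong_hull_mult:
  assumes "\<And>g h. g \<in> G \<Longrightarrow> h \<in> G \<Longrightarrow> g ** h \<in> G"
  shows "X \<in> cong_hull q G \<Longrightarrow> Y \<in> cong_hull q G \<Longrightarrow> X ** Y \<in> cong_hull q G"
  unfolding cong_hull_def using assms mat_cong_mult by blast

lemma cong_hull_cong: "X \<in> cong_hull q G \<Longrightarrow> mat_cong q X Y \<Longrightarrow> Y \<in> cong_hull q G"
  unfolding cong_hull_def using mat_cong_trans by blast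

text \<open>The inverse of g is congruent to the positive power g^(2n-1), where g^n = 1 modulo q.\<close>

lemma adj2_in_cong_hull:
  assumes mult: "\<And>g h. g \<in> G \<Longrightarrow> h \<in> G \<Longrightarrow> g ** h \<in> G"
    and det: "\<And>g. g \<in> G \<Longrightarrow> det g = 1"
    and "q \<ge> 1" and g: "g \<in> G"
  shows "adj2 g \<in> cong_hull q G"
proof -
  obtain n where n: "n \<ge> 1" "mat_cong q (mat_pow g n) (mat 1)"
    using mat_pow_cong_one[OF \<open>q \<ge> 1\<close> det[OF g]] .
  have pow_in: "mat_pow g (Suc k) \<in> G" for k
    by (induction k) (simp_all add: g mult)
  define N where "N = n + n - 2"
  have N: "n + n = Suc (Suc N)"
    using n(1) by (simp add: N_def)
  have "mat_cong q (adj2 g ** mat_pow g (n + n)) (adj2 g ** (mat 1 ** mat 1))"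
    unfolding mat_pow_add by (intro mat_cong_mult n(2) mat_cong_refl)
  moreover have "adj2 g ** mat_pow g (n + n) = mat_pow g (Suc N)"
    unfolding N using adj2_mult_self[OF det[OF g]] by (simp add: matrix_mul_assoc)
  ultimately have "mat_cong q (mat_pow g (Suc N)) (adj2 g)"
    by simp
  then show ?thesis
    unfolding cong_hull_def using pow_in by blast
qed

lemma adj2_cong_hull:
  assumes "\<And>g h. g \<in> G \<Longrightarrow> h \<in> G \<Longrightarrow> g ** h \<in> G"
    and "\<And>g. g \<in> G \<Longrightarrow> det g = 1"
    and "q \<ge> 1" and "X \<in> cong_hull q G"
  shows "adj2 X \<in> cong_hull q G"
proof -
  obtain g where "g \<in> G" "mat_cong q g X"
    using assms(4) unfolding cong_hull_def by blast
  then show ?thesis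
    using adj2_in_cong_hull[OF assms(1-3)] mat_cong_adj2 cong_hull_cong by blast
qed

subsection \<open>Generation of SL_2(Z/qZ) by elementary matrices\<close>

abbreviation upper_unipotent :: "int \<Rightarrow> int^2^2" where
  "upper_unipotent k \<equiv> mat2 1 k 0 1"

abbreviation lower_unipotent :: "int \<Rightarrow> int^2^2" where
  "lower_unipotent k \<equiv> mat2 1 0 k 1"

locale elementary_residues =
  fixes q :: int and S :: "(int^2^2) set"
  assumes q_pos: "q \<ge> 1"
    and mult_closed: "X \<in> S \<Longrightarrow> Y \<in> S \<Longrightarrow> X ** Y \<in> S"
    and cong_closed: "X \<in> S \<Longrightarrow> mat_cong q X Y \<Longrightarrow> Y \<in> S"
    and one_mem: "mat 1 \<in> S"
    and upper_one_mem: "upper_unipotent 1 \<in> S"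
    and lower_one_mem: "lower_unipotent 1 \<in> S"
begin

lemma mod_nonneg_cong_mem:
  assumes "\<And>n. P (int n) \<in> S" and "\<And>k. mat_cong q (P (k mod q)) (P k)"
  shows "P k \<in> S"
  using assms(1)[of "nat (k mod q)"] assms(2)[of k] q_pos cong_closed by simp

lemma upper_unipotent_mem: "upper_unipotent k \<in> S"
proof (rule mod_nonneg_cong_mem[where P = upper_unipotent])
  show "upper_unipotent (int n) \<in> S" for n
  proof (induction n)
    case 0 show ?case using one_mem by (simp add: mat_one_mat2)
  next
    case (Suc n)
    have "upper_unipotent (int (Suc n)) = upper_unipotent (int n) ** upper_unipotent 1"
      by (simp add: matrix_mul_mat2)
    then show ?case using mult_closed[OF Suc upper_one_mem] by simp
  qed
qed (simp add: mat_cong_mat2_iff cong_def)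

lemma lower_unipotent_mem: "lower_unipotent k \<in> S"
proof (rule mod_nonneg_cong_mem[where P = lower_unipotent])
  show "lower_unipotent (int n) \<in> S" for n
  proof (induction n)
    case 0 show ?case using one_mem by (simp add: mat_one_mat2)
  next
    case (Suc n)
    have "lower_unipotent (int (Suc n)) = lower_unipotent (int n) ** lower_unipotent 1"
      by (simp add: matrix_mul_mat2 add.commute)
    then show ?case using mult_closed[OF Suc lower_one_mem] by simp
  qed
qed (simp add: mat_cong_mat2_iff cong_def)

lemma rotation_mem: "mat2 0 (-1) 1 0 \<in> S"
proof -
  have "upper_unipotent (-1) ** lower_unipotent 1 ** upper_unipotent (-1) \<in> S"
    by (intro mult_closed upper_unipotent_mem lower_unipotent_mem)
  then show ?thesis
    by (simp add: matrix_mul_mat2)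
qed

text \<open>With a d = 1 + q t, the product T^a L^(-d) T^a is congruent to [[0,a],[-d,0]].\<close>

lemma upper_triangular_mem:
  assumes "[a * d = 1] (mod q)"
  shows "mat2 a b 0 d \<in> S"
proof -
  obtain t where t: "a * d = 1 + q * t"
    using cong_sym[OF assms] unfolding cong_iff_lin by blast
  have "upper_unipotent a ** lower_unipotent (-d) ** upper_unipotent a \<in> S"
    by (intro mult_closed upper_unipotent_mem lower_unipotent_mem)
  moreover have "upper_unipotent a ** lower_unipotent (-d) ** upper_unipotent a =
      mat2 (1 - a*d) (a*(1 - a*d) + a) (-d) (1 - a*d)"
    by (simp add: matrix_mul_mat2 algebra_simps)
  moreover have "[1 - a*d = 0] (mod q)" "[a*(1 - a*d) + a = a] (mod q)"
    unfolding cong_iff_lin by (auto simp: t algebra_simps)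
  ultimately have "mat2 0 a (-d) 0 \<in> S"
    using cong_closed by (simp add: mat_cong_mat2_iff)
  then have "mat2 0 a (-d) 0 ** mat2 0 (-1) 1 0 ** upper_unipotent (d*b) \<in> S"
    by (intro mult_closed rotation_mem upper_unipotent_mem)
  moreover have "mat2 0 a (-d) 0 ** mat2 0 (-1) 1 0 ** upper_unipotent (d*b) = mat2 a (a*d*b) 0 d"
    by (simp add: matrix_mul_mat2 mult.assoc)
  moreover have "[a*d*b = b] (mod q)"
    unfolding cong_iff_lin t by (rule exI[of _ "- (b*t)"]) (simp add: algebra_simps)
  ultimately show ?thesis
    using cong_closed by (simp add: mat_cong_mat2_iff)
qed

text \<open>
  Euclid on the first column: left multiplication by T^k replaces a by a mod c, and the rotation
  [[0,-1],[1,0]] swaps the column (up to sign), so |c| decreases until c = 0.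
\<close>

theorem det_cong_one_mem:
  "[a * d - b * c = 1] (mod q) \<Longrightarrow> mat2 a b c d \<in> S"
proof (induction "nat \<bar>c\<bar>" arbitrary: a b c d rule: less_induct)
  case less
  show ?case
  proof (cases "c = 0")
    case True
    then show ?thesis using less.prems upper_triangular_mem by simp
  next
    case False
    define k where "k = a div c"
    define a' b' where "a' = a - k * c" and "b' = b - k * d"
    have "nat \<bar>-a'\<bar> < nat \<bar>c\<bar>"
      using abs_mod_less[OF False, of a] by (simp add: a'_def k_def minus_div_mult_eq_mod)
    moreover have "[c * (-b') - d * (-a') = 1] (mod q)"
      using less.prems by (simp add: a'_def b'_def algebra_simps)
    ultimately have "mat2 c d (-a') (-b') \<in> S"
      by (rule less.hyps)
    then have "upper_unipotent k ** (mat2 0 (-1) 1 0 ** mat2 c d (-a') (-b')) \<in> S"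
      by (intro mult_closed upper_unipotent_mem rotation_mem)
    moreover have "upper_unipotent k ** (mat2 0 (-1) 1 0 ** mat2 c d (-a') (-b')) = mat2 a b c d"
      by (simp add: matrix_mul_mat2 a'_def b'_def)
    ultimately show ?thesis by simp
  qed
qed

end

lemma det_Gamma_A: "g \<in> Gamma_A A \<Longrightarrow> det g = 1"
  by (induction rule: Gamma_A.induct) (simp_all add: det_mul gamma_mat_mat2 det_mat2)

lemma elementary_residues_Gamma_A:
  assumes "m \<in> A" and "m + 1 \<in> A" and "q \<ge> 1"
  shows "elementary_residues q (cong_hull q (Gamma_A A))"
proof -
  let ?H = "cong_hull q (Gamma_A A)"
  let ?P = "gamma_mat m ** gamma_mat m"
  let ?Q = "gamma_mat m ** gamma_mat (m + 1)"
  let ?U = "gamma_mat (m + 1) ** gamma_mat m"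
  have mult: "X \<in> ?H \<Longrightarrow> Y \<in> ?H \<Longrightarrow> X ** Y \<in> ?H" for X Y
    by (rule cong_hull_mult) (rule Gamma_A.mult)
  have gens: "?P \<in> ?H" "?Q \<in> ?H" "?U \<in> ?H"
    using assms(1,2) by (auto intro: mem_cong_hull Gamma_A.gen)
  have inv: "adj2 ?P \<in> ?H"
    using adj2_cong_hull[OF Gamma_A.mult det_Gamma_A assms(3) gens(1)] .
  have "adj2 ?P ** ?P = mat 1"
    by (simp add: adj2_mult_self det_mul gamma_mat_mat2 det_mat2)
  moreover have "adj2 ?P ** ?Q = upper_unipotent 1" "?U ** adj2 ?P = lower_unipotent 1"
    by (simp_all add: gamma_mat_mat2 matrix_mul_mat2 adj2_def algebra_simps)
  ultimately show ?thesis
    using assms(3) mult[OF inv gens(1)] mult[OF inv gens(2)] mult[OF gens(3) inv]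
    by unfold_locales (simp_all add: mult cong_hull_cong)
qed

lemma reduce_mod_SL2_mod:
  assumes "q \<ge> 1" and "[det g = 1] (mod q)"
  shows "reduce_mod q g \<in> SL2_mod q"
proof -
  have "[det (reduce_mod q g) = det g] (mod q)"
    unfolding det_2 reduce_mod_def vec_lambda_beta by (intro cong_diff cong_mult) (simp_all add: cong_def)
  then show ?thesis
    using assms by (auto simp: SL2_mod_def reduce_mod_def intro: cong_trans)
qed

lemma reduce_mod_SL2_mod_eq: "M \<in> SL2_mod q \<Longrightarrow> reduce_mod q M = M"
  by (simp add: SL2_mod_def reduce_mod_def vec_eq_iff)

theorem lemmaB3:
  fixes A :: "nat set" and m :: nat
  assumes "m \<ge> 1" and "m \<in> A" and "m + 1 \<in> A"
  shows "everywhere_strong_approx (Gamma_A A)"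
  unfolding everywhere_strong_approx_def
proof (intro allI impI equalityI subsetI)
  fix q :: int assume q: "q \<ge> 1"
  show "M \<in> SL2_mod q" if "M \<in> reduce_mod q ` Gamma_A A" for M
    using that q det_Gamma_A reduce_mod_SL2_mod by auto
  fix M assume M: "M \<in> SL2_mod q"
  interpret elementary_residues q "cong_hull q (Gamma_A A)"
    using elementary_residues_Gamma_A[OF assms(2,3) q] .
  have "mat2 (M$1$1) (M$1$2) (M$2$1) (M$2$2) \<in> cong_hull q (Gamma_A A)"
    using M by (intro det_cong_one_mem) (simp add: SL2_mod_def det_2)
  then obtain g where "g \<in> Gamma_A A" "mat_cong q g M"
    unfolding mat2_eta cong_hull_def by blast
  then show "M \<in> reduce_mod q ` Gamma_A A"
    using reduce_mod_SL2_mod_eq[OF M] by (auto simp: mat_cong_iff_reduce_mod)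
qed

end
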